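(* (i) Every topological group without nontrivial convergent sequences is TAP. (ii) Every infinite pseudocompact topological group without nontrivial convergent sequences is TAP but not NSS.
   Context: Topological groups are Hausdorff. A topological group is NSS if some open neighborhood of the identity contains no nontrivial subgroup. A subset $A$ of a topological group $G$ is absolutely productive in $G$ if for every injection $a:\mathbb{N}\to A$ and every map $z:\mathbb{N}\to\mathbb{Z}$ the sequence $\left(\prod_{n=0}^{k}a(n)^{z(n)}\right)_{k\in\mathbb{N}}$ converges in $G$; $G$ is TAP if every absolutely productive subset of $G$ is finite. A nontrivial convergent sequence is a convergent sequence that is not eventually constant. *)

theory Defs
  imports "HOL-Analysis.Analysis" "HOL-Algebra.Group"
begin

definition topological_group :: "('a, 'b) monoid_scheme \<Rightarrow> 'a topology \<Rightarrow> bool" where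
  "topological_group G T \<longleftrightarrow>
     group G \<and> topspace T = carrier G \<and> Hausdorff_space T \<and>
     continuous_map (prod_topology T T) T (\<lambda>p. fst p \<otimes>\<^bsub>G\<^esub> snd p) \<and>
     continuous_map T T (\<lambda>x. inv\<^bsub>G\<^esub> x)"

definition NSS :: "('a, 'b) monoid_scheme \<Rightarrow> 'a topology \<Rightarrow> bool" where
  "NSS G T \<longleftrightarrow> (\<exists>U. openin T U \<and> \<one>\<^bsub>G\<^esub> \<in> U \<and>
      (\<forall>H. subgroup H G \<and> H \<subseteq> U \<longrightarrow> H = {\<one>\<^bsub>G\<^esub>}))"

fun partial_prod :: "('a, 'b) monoid_scheme \<Rightarrow> (nat \<Rightarrow> 'a) \<Rightarrow> (nat \<Rightarrow> int) \<Rightarrow> nat \<Rightarrow> 'a" where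
  "partial_prod G a z 0 = a 0 [^]\<^bsub>G\<^esub> z 0"
| "partial_prod G a z (Suc k) = partial_prod G a z k \<otimes>\<^bsub>G\<^esub> (a (Suc k) [^]\<^bsub>G\<^esub> z (Suc k))"

definition absolutely_productive :: "('a, 'b) monoid_scheme \<Rightarrow> 'a topology \<Rightarrow> 'a set \<Rightarrow> bool" where
  "absolutely_productive G T A \<longleftrightarrow> A \<subseteq> carrier G \<and>
     (\<forall>a :: nat \<Rightarrow> 'a. \<forall>z :: nat \<Rightarrow> int. inj a \<and> range a \<subseteq> A \<longrightarrow>
        (\<exists>l. limitin T (partial_prod G a z) l sequentially))"

definition TAP :: "('a, 'b) monoid_scheme \<Rightarrow> 'a topology \<Rightarrow> bool" where
  "TAP G T \<longleftrightarrow> (\<forall>A. absolutely_productive G T A \<longrightarrow> finite A)"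

definition has_nontrivial_convergent_seq :: "'a topology \<Rightarrow> bool" where
  "has_nontrivial_convergent_seq T \<longleftrightarrow>
     (\<exists>s :: nat \<Rightarrow> 'a. \<exists>l. range s \<subseteq> topspace T \<and> limitin T s l sequentially \<and>
        \<not> (\<exists>N. \<forall>n\<ge>N. s n = s N))"

definition pseudocompact :: "'a topology \<Rightarrow> bool" where
  "pseudocompact T \<longleftrightarrow>
     (\<forall>f. continuous_map T euclideanreal f \<longrightarrow> bounded (f ` topspace T))"

end

theory Submission
  imports Defs
begin

text \<open>Part (i): for an injective sequence a, the partial products a(0) a(1) ... a(k) converge
by absolute productivity, but they cannot be eventually constant, since that would force
a(k) = 1 for two consecutive indices.

Part (ii): suppose an open U containing 1 contains no nontrivial subgroup. Choose symmetric open
neighbourhoods U \<supseteq> V(0) \<supseteq> V(1) \<supseteq> ... of 1 with V(n+1) V(n+1) V(n+1) \<subseteq> V(n); their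
intersection is a subgroup inside U, hence trivial. Kelley's construction turns the chain into
a continuous gauge g on G that vanishes only at 1 and is small on V(n). Pseudocompactness forces
every neighbourhood W of 1 to contain some set {g < \<epsilon>}: otherwise max 0 (2b - 1) / g, with b a
continuous function vanishing at 1 and at least 1 outside W, would be an unbounded continuous
function. So the sets {g < 2^-n} form a neighbourhood base at 1. An infinite pseudocompact group
is not discrete, so we may pick y(n) \<noteq> 1 with g(y(n)) < 2^-n, a nontrivial sequence
converging to 1.\<close>

definition list_prod :: "('a, 'b) monoid_scheme \<Rightarrow> 'a list \<Rightarrow> 'a" where
  "list_prod G xs = foldr (\<lambda>a b. a \<otimes>\<^bsub>G\<^esub> b) xs \<one>\<^bsub>G\<^esub>"

lemma list_prod_Nil [simp]: "list_prod G [] = \<one>\<^bsub>G\<^esub>"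
  by (simp add: list_prod_def)

lemma list_prod_Cons [simp]: "list_prod G (x # xs) = x \<otimes>\<^bsub>G\<^esub> list_prod G xs"
  by (simp add: list_prod_def)

lemma (in monoid) list_prod_closed: "set xs \<subseteq> carrier G \<Longrightarrow> list_prod G xs \<in> carrier G"
  by (induction xs) auto

lemma (in monoid) list_prod_append:
  "set xs \<subseteq> carrier G \<Longrightarrow> set ys \<subseteq> carrier G \<Longrightarrow>
    list_prod G (xs @ ys) = list_prod G xs \<otimes> list_prod G ys"
  by (induction xs) (auto simp: m_assoc list_prod_closed)

lemma sum_list_split_halves:
  fixes f :: "'a \<Rightarrow> real"
  assumes "xs \<noteq> []" "\<forall>x. 0 \<le> f x" "0 \<le> a" "a \<le> h" "a + sum_list (map f xs) \<le> 2 * h"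
  shows "\<exists>A b C. xs = A @ b # C \<and> a + sum_list (map f A) \<le> h \<and> sum_list (map f C) \<le> h"
  using assms
proof (induction xs arbitrary: a)
  case Nil
  then show ?case by simp
next
  case (Cons x ys)
  show ?case
  proof (cases "ys = []")
    case True
    then show ?thesis using Cons.prems
      by (intro exI[of _ "[]"] exI[of _ x] exI[of _ "[]"]) simp
  next
    case ne: False
    show ?thesis
    proof (cases "a + f x \<le> h")
      case True
      have "0 \<le> a + f x" "a + f x + sum_list (map f ys) \<le> 2 * h"
        using Cons.prems by (simp_all add: add_nonneg_nonneg)
      then obtain A b C where "ys = A @ b # C" "a + f x + sum_list (map f A) \<le> h"
          "sum_list (map f C) \<le> h"
        using Cons.IH[OF ne Cons.prems(2) _ True] by blast
      then show ?thesis
        by (intro exI[of _ "x # A"] exI[of _ b] exI[of _ C]) (simp add: add.assoc)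
    next
      case False
      then show ?thesis using Cons.prems
        by (intro exI[of _ "[]"] exI[of _ x] exI[of _ ys]) simp
    qed
  qed
qed

lemma continuous_map_real_divide_vanishing:
  assumes f: "continuous_map X euclideanreal f" and g: "continuous_map X euclideanreal g"
    and vanish: "\<And>x. x \<in> topspace X \<Longrightarrow> g x = 0 \<Longrightarrow> eventually (\<lambda>y. f y = 0) (atin X x)"
  shows "continuous_map X euclideanreal (\<lambda>x. f x / g x)"
  unfolding continuous_map_atin limitin_canonical_iff
proof
  fix x assume x: "x \<in> topspace X"
  show "((\<lambda>x. f x / g x) \<longlongrightarrow> f x / g x) (atin X x)"
  proof (cases "g x = 0")
    case True
    have "eventually (\<lambda>y. f y / g y = f x / g x) (atin X x)"
      using vanish[OF x True] by (rule eventually_mono) (simp add: True)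
    then show ?thesis by (rule tendsto_eventually)
  next
    case False
    have "(f \<longlongrightarrow> f x) (atin X x)" "(g \<longlongrightarrow> g x) (atin X x)"
      using f g x by (simp_all add: continuous_map_atin)
    then show ?thesis using False by (rule tendsto_divide)
  qed
qed

lemma has_nontrivial_convergent_seq_if_limitin_avoiding:
  assumes Hausdorff: "Hausdorff_space X" and range: "range s \<subseteq> topspace X"
    and lim: "limitin X s l sequentially" and avoid: "\<And>n. s n \<noteq> l"
  shows "has_nontrivial_convergent_seq X"
proof -
  have "\<not> (\<exists>N. \<forall>n\<ge>N. s n = s N)"
  proof
    assume "\<exists>N. \<forall>n\<ge>N. s n = s N"
    then obtain N where N: "\<forall>n\<ge>N. s n = s N" by blast
    have "s N \<in> topspace X" using range by auto
    moreover have "eventually (\<lambda>n. s n = s N) sequentially"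
      using N unfolding eventually_sequentially by blast
    ultimately have "limitin X s (s N) sequentially" by (rule limitin_eventually)
    then have "s N = l"
      using lim trivial_limit_sequentially Hausdorff by (rule limitin_Hausdorff_unique)
    with avoid show False by blast
  qed
  with range lim show ?thesis
    unfolding has_nontrivial_convergent_seq_def by (intro exI[of _ s] exI[of _ l]) simp
qed

locale topgroup = group G for G (structure) +
  fixes T :: "'a topology"
  assumes topspace_eq: "topspace T = carrier G"
    and Hausdorff: "Hausdorff_space T"
    and continuous_mult: "continuous_map (prod_topology T T) T (\<lambda>p. fst p \<otimes> snd p)"
    and continuous_inv: "continuous_map T T (\<lambda>x. inv x)"

lemma topgroupI: "topological_group G T \<Longrightarrow> topgroup G T"
  unfolding topological_group_def topgroup_def topgroup_axioms_def by blast

lemma (in group) partial_prod_not_eventually_const: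
  assumes "inj a" "range a \<subseteq> carrier G"
  shows "\<not> (\<exists>N. \<forall>n\<ge>N. partial_prod G a (\<lambda>_. 1) n = partial_prod G a (\<lambda>_. 1) N)"
proof
  let ?p = "partial_prod G a (\<lambda>_. 1)"
  have aG: "a n \<in> carrier G" for n using assms(2) by auto
  have pG: "?p n \<in> carrier G" for n by (induction n) (auto simp: aG)
  assume "\<exists>N. \<forall>n\<ge>N. ?p n = ?p N"
  then obtain N where N: "\<forall>n\<ge>N. ?p n = ?p N" by blast
  have step: "?p (Suc n) = ?p n \<otimes> a (Suc n)" for n
    using aG by simp
  have one: "a (Suc n) = \<one>" if "n \<ge> N" for n
  proof -
    have "?p n \<otimes> a (Suc n) = ?p n"
      using N that step[of n] by (metis le_SucI)
    then show ?thesis using pG aG l_cancel_one by blast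
  qed
  have "a (Suc N) = a (Suc (Suc N))" using one[of N] one[of "Suc N"] by simp
  then show False using assms(1) by (metis inj_eq n_not_Suc_n)
qed

context topgroup
begin

lemma TAP_if_no_nontrivial_convergent_seq:
  assumes "\<not> has_nontrivial_convergent_seq T"
  shows "TAP G T"
  unfolding TAP_def
proof (intro allI impI, rule ccontr)
  fix A assume A: "absolutely_productive G T A" and "infinite A"
  then obtain a :: "nat \<Rightarrow> 'a" where a: "inj a" "range a \<subseteq> A"
    using infinite_countable_subset by blast
  then have aG: "range a \<subseteq> carrier G" using A by (auto simp: absolutely_productive_def)
  obtain l where "limitin T (partial_prod G a (\<lambda>_. 1)) l sequentially"
    using A a unfolding absolutely_productive_def by blast
  moreover have "range (partial_prod G a (\<lambda>_. 1)) \<subseteq> topspace T"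
  proof -
    have "partial_prod G a (\<lambda>_. 1) n \<in> carrier G" for n using aG by (induction n) auto
    then show ?thesis using topspace_eq by auto
  qed
  ultimately have "has_nontrivial_convergent_seq T"
    using partial_prod_not_eventually_const[OF a(1) aG]
    unfolding has_nontrivial_convergent_seq_def by blast
  with assms show False by simp
qed

lemma continuous_map_left_mult: "a \<in> carrier G \<Longrightarrow> continuous_map T T (\<lambda>x. a \<otimes> x)"
proof -
  assume a: "a \<in> carrier G"
  have "continuous_map T (prod_topology T T) (\<lambda>x. (a, x))"
    using a topspace_eq by (intro continuous_map_pairedI) auto
  from continuous_map_compose[OF this continuous_mult] show ?thesis by (simp add: o_def)
qed

lemma openin_left_mult_preimage:
  "openin T U \<Longrightarrow> b \<in> carrier G \<Longrightarrow> openin T {x \<in> carrier G. b \<otimes> x \<in> U}"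
  using openin_continuous_map_preimage[OF continuous_map_left_mult] topspace_eq by metis

lemma openin_inv_preimage: "openin T U \<Longrightarrow> openin T {x \<in> carrier G. inv x \<in> U}"
  using openin_continuous_map_preimage[OF continuous_inv] topspace_eq by metis

lemma exists_symmetric_nbhd_mult_subset:
  assumes W: "openin T W" "\<one> \<in> W"
  obtains V where "openin T V" "\<one> \<in> V" "\<And>x. x \<in> V \<Longrightarrow> inv x \<in> V"
    "\<And>x y. x \<in> V \<Longrightarrow> y \<in> V \<Longrightarrow> x \<otimes> y \<in> W"
proof -
  define P where "P = {p \<in> topspace (prod_topology T T). fst p \<otimes> snd p \<in> W}"
  have "openin (prod_topology T T) P"
    unfolding P_def by (rule openin_continuous_map_preimage[OF continuous_mult W(1)])
  moreover have "(\<one>, \<one>) \<in> P"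
    unfolding P_def using W(2) topspace_eq by simp
  ultimately obtain A B where AB: "openin T A" "openin T B" "\<one> \<in> A" "\<one> \<in> B" "A \<times> B \<subseteq> P"
    unfolding openin_prod_topology_alt by meson
  define V where "V = (A \<inter> B) \<inter> {x \<in> carrier G. inv x \<in> A \<inter> B}"
  show thesis
  proof
    show "openin T V"
      unfolding V_def using AB(1,2) by (intro openin_Int openin_inv_preimage) auto
    show "\<one> \<in> V" using AB(3,4) by (simp add: V_def)
    show "inv x \<in> V" if "x \<in> V" for x using that by (simp add: V_def)
    show "x \<otimes> y \<in> W" if "x \<in> V" "y \<in> V" for x y
      using that AB(5) by (auto simp: V_def P_def)
  qed
qed

lemma exists_symmetric_nbhd_mult3_subset:
  assumes W: "openin T W" "\<one> \<in> W"
  obtains V where "openin T V" "\<one> \<in> V" "\<And>x. x \<in> V \<Longrightarrow> inv x \<in> V"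
    "\<And>x y z. x \<in> V \<Longrightarrow> y \<in> V \<Longrightarrow> z \<in> V \<Longrightarrow> x \<otimes> y \<otimes> z \<in> W"
proof -
  obtain V1 where V1: "openin T V1" "\<one> \<in> V1" "\<And>x y. x \<in> V1 \<Longrightarrow> y \<in> V1 \<Longrightarrow> x \<otimes> y \<in> W"
    using exists_symmetric_nbhd_mult_subset[OF W] by metis
  obtain V where V: "openin T V" "\<one> \<in> V" "\<And>x. x \<in> V \<Longrightarrow> inv x \<in> V"
    "\<And>x y. x \<in> V \<Longrightarrow> y \<in> V \<Longrightarrow> x \<otimes> y \<in> V1"
    using exists_symmetric_nbhd_mult_subset[OF V1(1,2)] by metis
  show thesis
  proof (rule that[OF V(1-3)])
    fix x y z assume xyz: "x \<in> V" "y \<in> V" "z \<in> V"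
    have "z \<in> carrier G" using xyz(3) openin_subset[OF V(1)] topspace_eq by auto
    then have "z \<in> V1" using V(4)[OF xyz(3) V(2)] by simp
    then show "x \<otimes> y \<otimes> z \<in> W" using V1(3) V(4)[OF xyz(1,2)] by blast
  qed
qed

end

locale nbhd_chain = topgroup +
  fixes V :: "nat \<Rightarrow> 'a set"
  assumes openin_V: "openin T (V n)" and one_in_V: "\<one> \<in> V n"
    and inv_in_V: "x \<in> V n \<Longrightarrow> inv x \<in> V n"
    and mult3_in_V: "x \<in> V (Suc n) \<Longrightarrow> y \<in> V (Suc n) \<Longrightarrow> z \<in> V (Suc n) \<Longrightarrow> x \<otimes> y \<otimes> z \<in> V n"

lemma (in topgroup) exists_nbhd_chain:
  assumes "openin T W" "\<one> \<in> W"
  obtains V where "nbhd_chain G T V" "V 0 \<subseteq> W"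
proof -
  define cube_nbhd where "cube_nbhd W' V' \<longleftrightarrow> openin T V' \<and> \<one> \<in> V' \<and> (\<forall>x\<in>V'. inv x \<in> V') \<and>
      (\<forall>x\<in>V'. \<forall>y\<in>V'. \<forall>z\<in>V'. x \<otimes> y \<otimes> z \<in> W')" for W' V'
  have "\<exists>V'. cube_nbhd W' V'" if "openin T W'" "\<one> \<in> W'" for W'
    using exists_symmetric_nbhd_mult3_subset[OF that] unfolding cube_nbhd_def by metis
  then obtain step where step: "\<And>W'. openin T W' \<Longrightarrow> \<one> \<in> W' \<Longrightarrow> cube_nbhd W' (step W')"
    by metis
  define V where "V n = (step ^^ Suc n) W" for n
  have V_Suc: "V (Suc n) = step (V n)" for n by (simp add: V_def)
  have nbhd: "openin T (V n) \<and> \<one> \<in> V n" for n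
    using assms step by (induction n) (auto simp: V_def cube_nbhd_def)
  then have cube_V0: "cube_nbhd W (V 0)" and cube_V: "cube_nbhd (V n) (V (Suc n))" for n
    using assms step V_Suc by (auto simp: V_def)
  have "nbhd_chain G T V"
  proof unfold_locales
    fix n
    show "openin T (V n)" "\<one> \<in> V n" using nbhd by auto
    show "inv x \<in> V n" if "x \<in> V n" for x
      using that cube_V0 cube_V[of "n - 1"] by (cases n) (auto simp: cube_nbhd_def)
    show "x \<otimes> y \<otimes> z \<in> V n" if "x \<in> V (Suc n)" "y \<in> V (Suc n)" "z \<in> V (Suc n)" for x y z
      using that cube_V[of n] by (auto simp: cube_nbhd_def)
  qed
  moreover have "V 0 \<subseteq> W"
  proof
    fix x assume x: "x \<in> V 0"
    have "\<one> \<otimes> \<one> \<otimes> x \<in> W" using cube_V0 x unfolding cube_nbhd_def by blast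
    moreover have "x \<in> carrier G"
      using x cube_V0 openin_subset topspace_eq by (auto simp: cube_nbhd_def)
    ultimately show "x \<in> W" by simp
  qed
  ultimately show thesis by (rule that)
qed

context nbhd_chain
begin

lemma V_subset_carrier: "V n \<subseteq> carrier G"
  using openin_subset[OF openin_V] topspace_eq by simp

lemma V_Suc_subset: "V (Suc n) \<subseteq> V n"
proof
  fix x assume x: "x \<in> V (Suc n)"
  then have "\<one> \<otimes> \<one> \<otimes> x \<in> V n" using one_in_V mult3_in_V by blast
  moreover have "x \<in> carrier G" using x V_subset_carrier by blast
  ultimately show "x \<in> V n" by simp
qed

lemma V_antimono: "m \<le> n \<Longrightarrow> V n \<subseteq> V m"
  using lift_Suc_antimono_le[of V, OF V_Suc_subset] by blast

lemma subgroup_Inter_V: "subgroup (\<Inter>n. V n) G"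
proof (rule subgroup.intro)
  show "(\<Inter>n. V n) \<subseteq> carrier G" using V_subset_carrier by blast
  show "\<one> \<in> (\<Inter>n. V n)" using one_in_V by blast
  show "inv x \<in> (\<Inter>n. V n)" if "x \<in> (\<Inter>n. V n)" for x using that inv_in_V by blast
  show "x \<otimes> y \<in> (\<Inter>n. V n)" if "x \<in> (\<Inter>n. V n)" "y \<in> (\<Inter>n. V n)" for x y
  proof
    fix n
    have "x \<otimes> y \<otimes> \<one> \<in> V n" using that one_in_V by (intro mult3_in_V) auto
    moreover have "x \<in> carrier G" "y \<in> carrier G" using that V_subset_carrier by blast+
    ultimately show "x \<otimes> y \<in> V n" by simp
  qed
qed

end

text \<open>Kelley's construction from the proof of the Birkhoff-Kakutani metrization theorem:
taking the infimum over all factorizations makes the gauge subadditive, hence continuous,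
while the cube condition on the chain keeps it comparable to rough_gauge.\<close>

context nbhd_chain
begin

definition rough_gauge :: "'a \<Rightarrow> real" where
  "rough_gauge y = Inf (insert 1 {(1/2)^n | n. y \<in> V n})"

lemma bdd_below_rough_gauge_set: "bdd_below (insert 1 {(1/2::real)^n | n. y \<in> V n})"
  by (rule bdd_belowI[of _ 0]) auto

lemma rough_gauge_nonneg: "0 \<le> rough_gauge y"
  unfolding rough_gauge_def by (rule cInf_greatest) auto

lemma rough_gauge_le_one: "rough_gauge y \<le> 1"
  unfolding rough_gauge_def by (rule cInf_lower[OF _ bdd_below_rough_gauge_set]) simp

lemma rough_gauge_le_if_mem: "y \<in> V n \<Longrightarrow> rough_gauge y \<le> (1/2)^n"
  unfolding rough_gauge_def by (rule cInf_lower[OF _ bdd_below_rough_gauge_set]) blast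

lemma mem_if_rough_gauge_less:
  assumes "rough_gauge y < (1/2)^n"
  shows "y \<in> V (Suc n)"
proof -
  have "bdd_below {(1/2::real)^n | n. y \<in> V n}" by (rule bdd_belowI[of _ 0]) auto
  then have "\<exists>x\<in>insert 1 {(1/2::real)^n | n. y \<in> V n}. x < (1/2)^n"
    using assms unfolding rough_gauge_def
    by (subst cInf_less_iff[symmetric]) (auto simp: bdd_below_rough_gauge_set)
  then obtain m where m: "y \<in> V m" "(1/2::real)^m < (1/2)^n"
    using power_le_one[of "1/2::real" n] by auto
  then have "n < m" by (simp add: power_strict_decreasing_iff)
  then show ?thesis using V_antimono[of "Suc n" m] m(1) by auto
qed

lemma rough_gauge_le_twice:
  assumes s: "0 \<le> s" and mem: "\<And>n. s < (1/2)^n \<Longrightarrow> y \<in> V n"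
  shows "rough_gauge y \<le> 2 * s"
proof (rule ccontr)
  assume "\<not> rough_gauge y \<le> 2 * s"
  then have lt: "2 * s < rough_gauge y" by simp
  then have "\<exists>n. (1/2::real)^n < rough_gauge y"
    using s real_arch_pow_inv[of "rough_gauge y" "1/2"] by simp
  define k where "k = (LEAST n. (1/2::real)^n < rough_gauge y)"
  have k: "(1/2::real)^k < rough_gauge y"
    unfolding k_def by (rule LeastI_ex) fact
  have "k \<noteq> 0" using k rough_gauge_le_one[of y] by (metis power_0 not_less)
  then obtain j where j: "k = Suc j" by (cases k) auto
  have "\<not> (1/2::real)^j < rough_gauge y"
    using not_less_Least[of j "\<lambda>n. (1/2::real)^n < rough_gauge y"] j k_def by simp
  then have "s < (1/2)^k" using j lt by simp
  then have "rough_gauge y \<le> (1/2)^k" by (intro rough_gauge_le_if_mem mem)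
  then show False using k by simp
qed

lemma rough_gauge_one: "rough_gauge \<one> = 0"
  using rough_gauge_le_twice[of 0 \<one>] one_in_V rough_gauge_nonneg[of \<one>] by simp

lemma rough_gauge_mult3_le:
  assumes "x \<in> carrier G" "y \<in> carrier G" "z \<in> carrier G"
    and "rough_gauge x \<le> s" "rough_gauge y \<le> s" "rough_gauge z \<le> s"
  shows "rough_gauge (x \<otimes> y \<otimes> z) \<le> 2 * s"
proof (rule rough_gauge_le_twice)
  show "0 \<le> s" using rough_gauge_nonneg[of x] assms by simp
  fix n assume n: "s < (1/2)^n"
  have "x \<in> V (Suc n)" "y \<in> V (Suc n)" "z \<in> V (Suc n)"
    using assms n by (auto intro!: mem_if_rough_gauge_less)
  then show "x \<otimes> y \<otimes> z \<in> V n" by (rule mult3_in_V)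
qed

text \<open>Split the list at an element b so that both remaining parts carry at most half of the
total, then apply induction to the two parts and the previous lemma to the three factors.\<close>

lemma rough_gauge_list_prod_le:
  "set xs \<subseteq> carrier G \<Longrightarrow> rough_gauge (list_prod G xs) \<le> 2 * sum_list (map rough_gauge xs)"
proof (induction xs rule: length_induct)
  case (1 xs)
  define s where "s = sum_list (map rough_gauge xs)"
  have nonneg: "0 \<le> sum_list (map rough_gauge ys)" for ys
    by (rule sum_list_nonneg) (auto simp: rough_gauge_nonneg)
  show ?case
  proof (cases "xs = []")
    case True
    then show ?thesis using rough_gauge_one by simp
  next
    case False
    obtain A b C where ABC: "xs = A @ b # C" "0 + sum_list (map rough_gauge A) \<le> s/2"
        "sum_list (map rough_gauge C) \<le> s/2"
      using sum_list_split_halves[OF False, of rough_gauge 0 "s/2"] nonneg[of xs]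
      unfolding s_def by (auto simp: rough_gauge_nonneg)
    have G: "set A \<subseteq> carrier G" "b \<in> carrier G" "set C \<subseteq> carrier G"
      using "1.prems" ABC(1) by auto
    have "rough_gauge (list_prod G A) \<le> 2 * sum_list (map rough_gauge A)"
      using "1.IH" G(1) ABC(1) by simp
    then have a: "rough_gauge (list_prod G A) \<le> s" using ABC(2) by simp
    have "rough_gauge (list_prod G C) \<le> 2 * sum_list (map rough_gauge C)"
      using "1.IH" G(3) ABC(1) by simp
    then have c: "rough_gauge (list_prod G C) \<le> s" using ABC(3) by simp
    have "s = sum_list (map rough_gauge A) + rough_gauge b + sum_list (map rough_gauge C)"
      unfolding s_def ABC(1) by simp
    then have b: "rough_gauge b \<le> s" using nonneg[of A] nonneg[of C] by simp
    have "list_prod G xs = list_prod G A \<otimes> b \<otimes> list_prod G C"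
      using G by (simp add: ABC(1) list_prod_append list_prod_closed m_assoc)
    then show ?thesis
      using rough_gauge_mult3_le[OF list_prod_closed[OF G(1)] G(2) list_prod_closed[OF G(3)] a b c]
      unfolding s_def by simp
  qed
qed

definition factorization_sums :: "'a \<Rightarrow> real set" where
  "factorization_sums y =
     {sum_list (map rough_gauge xs) | xs. set xs \<subseteq> carrier G \<and> list_prod G xs = y}"

definition gauge :: "'a \<Rightarrow> real" where
  "gauge y = Inf (factorization_sums y)"

lemma bdd_below_factorization_sums: "bdd_below (factorization_sums y)"
  unfolding factorization_sums_def
  by (rule bdd_belowI[of _ 0]) (auto intro!: sum_list_nonneg simp: rough_gauge_nonneg)

lemma gauge_le_sum_list:
  "set xs \<subseteq> carrier G \<Longrightarrow> gauge (list_prod G xs) \<le> sum_list (map rough_gauge xs)"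
  unfolding gauge_def
  by (rule cInf_lower[OF _ bdd_below_factorization_sums]) (auto simp: factorization_sums_def)

lemma factorization_sums_nonempty: "y \<in> carrier G \<Longrightarrow> factorization_sums y \<noteq> {}"
  unfolding factorization_sums_def by (auto intro!: exI[of _ "[y]"])

lemma gauge_nonneg: "y \<in> carrier G \<Longrightarrow> 0 \<le> gauge y"
  unfolding gauge_def using factorization_sums_nonempty
  by (intro cInf_greatest) (auto simp: factorization_sums_def intro!: sum_list_nonneg
      simp: rough_gauge_nonneg)

lemma rough_gauge_le_twice_gauge:
  assumes "y \<in> carrier G"
  shows "rough_gauge y \<le> 2 * gauge y"
proof -
  have "rough_gauge y / 2 \<le> gauge y" unfolding gauge_def
  proof (rule cInf_greatest)
    show "factorization_sums y \<noteq> {}" using factorization_sums_nonempty[OF assms] .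
    fix t assume "t \<in> factorization_sums y"
    then obtain xs where "set xs \<subseteq> carrier G" "list_prod G xs = y" "t = sum_list (map rough_gauge xs)"
      unfolding factorization_sums_def by blast
    then show "rough_gauge y / 2 \<le> t" using rough_gauge_list_prod_le[of xs] by simp
  qed
  then show ?thesis by simp
qed

lemma gauge_less_imp_mem:
  assumes "y \<in> carrier G" "gauge y < (1/2)^Suc n"
  shows "y \<in> V n"
proof -
  have "rough_gauge y < (1/2)^n" using rough_gauge_le_twice_gauge[OF assms(1)] assms(2) by simp
  then show ?thesis using mem_if_rough_gauge_less V_Suc_subset by blast
qed

lemma gauge_one: "gauge \<one> = 0"
  using gauge_le_sum_list[of "[]"] gauge_nonneg[of \<one>] by simp

lemma gauge_mult_le:
  assumes x: "x \<in> carrier G" and u: "u \<in> carrier G"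
  shows "gauge (x \<otimes> u) \<le> gauge x + rough_gauge u"
proof -
  have "gauge (x \<otimes> u) - rough_gauge u \<le> gauge x" unfolding gauge_def[of x]
  proof (rule cInf_greatest)
    show "factorization_sums x \<noteq> {}" using factorization_sums_nonempty[OF x] .
    fix t assume "t \<in> factorization_sums x"
    then obtain xs where xs: "set xs \<subseteq> carrier G" "list_prod G xs = x"
        "t = sum_list (map rough_gauge xs)"
      unfolding factorization_sums_def by blast
    then have "gauge (x \<otimes> u) \<le> t + rough_gauge u"
      using gauge_le_sum_list[of "xs @ [u]"] u by (simp add: list_prod_append)
    then show "gauge (x \<otimes> u) - rough_gauge u \<le> t" by simp
  qed
  then show ?thesis by simp
qed

lemma gauge_dist_le:
  assumes x: "x \<in> carrier G" and y: "y \<in> carrier G" and q: "inv x \<otimes> y \<in> V n"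
  shows "\<bar>gauge y - gauge x\<bar> \<le> (1/2)^n"
proof -
  have q': "inv y \<otimes> x \<in> V n" using inv_in_V[OF q] x y by (simp add: inv_mult_group)
  have "gauge (x \<otimes> (inv x \<otimes> y)) \<le> gauge x + rough_gauge (inv x \<otimes> y)"
    using x y by (intro gauge_mult_le) auto
  moreover have "gauge (y \<otimes> (inv y \<otimes> x)) \<le> gauge y + rough_gauge (inv y \<otimes> x)"
    using x y by (intro gauge_mult_le) auto
  moreover have "x \<otimes> (inv x \<otimes> y) = y" "y \<otimes> (inv y \<otimes> x) = x"
    using x y by (simp_all add: m_assoc[symmetric])
  ultimately show ?thesis
    using rough_gauge_le_if_mem[OF q] rough_gauge_le_if_mem[OF q'] by simp
qed

lemma continuous_map_gauge: "continuous_map T euclideanreal gauge"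
  unfolding continuous_map_atin limitin_canonical_iff
proof
  fix x assume "x \<in> topspace T"
  then have x: "x \<in> carrier G" using topspace_eq by simp
  show "(gauge \<longlongrightarrow> gauge x) (atin T x)"
    unfolding tendsto_iff
  proof (intro allI impI)
    fix e :: real assume "0 < e"
    then obtain n where n: "(1/2::real)^n < e" using real_arch_pow_inv[of e "1/2"] by auto
    define U where "U = {y \<in> carrier G. inv x \<otimes> y \<in> V n}"
    have "openin T U" unfolding U_def using openin_left_mult_preimage[OF openin_V] x by simp
    moreover have "x \<in> U" using x one_in_V by (simp add: U_def)
    moreover have "\<forall>y\<in>U - {x}. dist (gauge y) (gauge x) < e"
      using gauge_dist_le[OF x] n by (force simp: U_def dist_real_def)
    ultimately show "\<forall>\<^sub>F y in atin T x. dist (gauge y) (gauge x) < e"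
      unfolding eventually_atin by blast
  qed
qed

end

context topgroup
begin

lemma exists_continuous_bump:
  assumes "openin T W" "\<one> \<in> W"
  obtains b where "continuous_map T euclideanreal b" "b \<one> = 0" "\<And>y. y \<in> carrier G - W \<Longrightarrow> 1 \<le> b y"
proof -
  obtain V where "nbhd_chain G T V" and V0: "V 0 \<subseteq> W"
    using exists_nbhd_chain[OF assms] by blast
  then interpret nbhd_chain G T V by simp
  show thesis
  proof (rule that[of "\<lambda>y. 2 * gauge y"])
    show "continuous_map T euclideanreal (\<lambda>y. 2 * gauge y)"
      by (rule continuous_map_real_mult_left[OF continuous_map_gauge])
    show "2 * gauge \<one> = 0" by (simp add: gauge_one)
    fix y assume y: "y \<in> carrier G - W"
    then have "\<not> gauge y < (1/2)^Suc 0" using gauge_less_imp_mem[of y 0] V0 by blast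
    then show "1 \<le> 2 * gauge y" by simp
  qed
qed

lemma not_openin_singleton_one:
  assumes inf: "infinite (carrier G)" and pc: "pseudocompact T"
  shows "\<not> openin T {\<one>}"
proof
  assume "openin T {\<one>}"
  moreover have "{y \<in> carrier G. inv x \<otimes> y \<in> {\<one>}} = {x}" if "x \<in> carrier G" for x
    using that inv_solve_left'[of \<one> x] by auto
  ultimately have "openin T {x}" if "x \<in> carrier G" for x
    using openin_left_mult_preimage[of "{\<one>}" "inv x"] that by force
  then have discrete: "openin T S" if "S \<subseteq> carrier G" for S
    using that by (subst openin_subopen) blast
  obtain s :: "nat \<Rightarrow> 'a" where s: "inj s" "range s \<subseteq> carrier G"
    using infinite_countable_subset[OF inf] by blast
  define f where "f y = (if y \<in> range s then real (inv_into UNIV s y) else 0)" for y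
  have "continuous_map T euclideanreal f"
    unfolding continuous_map_def using discrete topspace_eq by auto
  then obtain B where B: "\<forall>y\<in>topspace T. \<bar>f y\<bar> \<le> B"
    using pc by (auto simp: pseudocompact_def bounded_real)
  obtain n :: nat where n: "B < real n" using reals_Archimedean2 by blast
  have "f (s n) = real n" using s by (simp add: f_def)
  moreover have "s n \<in> topspace T" using s topspace_eq by auto
  ultimately show False using B n by force
qed

lemma pseudocompact_sublevel_subset_nbhd:
  assumes pc: "pseudocompact T" and g: "continuous_map T euclideanreal g"
    and g_zero: "\<And>y. y \<in> carrier G \<Longrightarrow> g y = 0 \<Longrightarrow> y = \<one>"
    and W: "openin T W" "\<one> \<in> W"
  obtains \<epsilon> where "\<epsilon> > 0" "\<And>y. y \<in> carrier G \<Longrightarrow> \<bar>g y\<bar> < \<epsilon> \<Longrightarrow> y \<in> W"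
proof -
  obtain b where b: "continuous_map T euclideanreal b" "b \<one> = 0"
      "\<And>y. y \<in> carrier G - W \<Longrightarrow> 1 \<le> b y"
    using exists_continuous_bump[OF W] by blast
  define F where "F y = max 0 (2 * b y - 1) / g y" for y
  have "continuous_map T euclideanreal F"
    unfolding F_def
  proof (rule continuous_map_real_divide_vanishing[OF _ g])
    show "continuous_map T euclideanreal (\<lambda>y. max 0 (2 * b y - 1))"
      using b(1) by (intro continuous_intros) auto
    fix x assume "x \<in> topspace T" "g x = 0"
    then have x: "x = \<one>" using g_zero topspace_eq by auto
    have "openin T {y \<in> topspace T. b y \<in> {..<1/2}}"
      by (rule openin_continuous_map_preimage[OF b(1)]) simp
    then show "eventually (\<lambda>y. max 0 (2 * b y - 1) = 0) (atin T x)"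
      unfolding eventually_atin using x b(2) topspace_eq by (intro disjI2 exI) auto
  qed
  then have "bounded (F ` topspace T)" using pc by (simp add: pseudocompact_def)
  then obtain B where B: "\<And>y. y \<in> carrier G \<Longrightarrow> \<bar>F y\<bar> \<le> B"
    using topspace_eq by (auto simp: bounded_real)
  have B_nonneg: "0 \<le> B" using B[of \<one>] by simp
  show thesis
  proof (rule that[of "1 / (B + 1)"])
    show "0 < 1 / (B + 1)" using B_nonneg by simp
    fix y assume y: "y \<in> carrier G" "\<bar>g y\<bar> < 1 / (B + 1)"
    show "y \<in> W"
    proof (rule ccontr)
      assume "y \<notin> W"
      then have "1 \<le> max 0 (2 * b y - 1)" "g y \<noteq> 0"
        using b(3) y(1) g_zero W(2) by force+
      then have "1 \<le> \<bar>F y\<bar> * \<bar>g y\<bar>" by (simp add: F_def abs_div_pos)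
      also have "\<dots> \<le> B * \<bar>g y\<bar>" using B[OF y(1)] by (simp add: mult_right_mono)
      also have "\<dots> < 1" using y(2) B_nonneg by (simp add: field_simps)
      finally show False by simp
    qed
  qed
qed

lemma not_NSS_if_pseudocompact:
  assumes inf: "infinite (carrier G)" and pc: "pseudocompact T"
    and no_seq: "\<not> has_nontrivial_convergent_seq T"
  shows "\<not> NSS G T"
proof
  assume "NSS G T"
  then obtain U where U: "openin T U" "\<one> \<in> U" "\<And>H. subgroup H G \<Longrightarrow> H \<subseteq> U \<Longrightarrow> H = {\<one>}"
    unfolding NSS_def by blast
  obtain V where "nbhd_chain G T V" and V0: "V 0 \<subseteq> U"
    using exists_nbhd_chain[OF U(1,2)] by blast
  then interpret nbhd_chain G T V by simp
  have "(\<Inter>n. V n) = {\<one>}" using U(3)[OF subgroup_Inter_V] V0 by blast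
  then have gauge_zero: "y = \<one>" if "y \<in> carrier G" "gauge y = 0" for y
    using gauge_less_imp_mem[OF that(1)] that(2) by auto
  have "\<exists>y. y \<in> carrier G \<and> y \<noteq> \<one> \<and> gauge y < (1/2)^n" for n
  proof (rule ccontr)
    assume "\<not> ?thesis"
    then have "{y \<in> topspace T. gauge y \<in> {..<(1/2)^n}} = {\<one>}"
      using gauge_one topspace_eq by auto
    moreover have "openin T {y \<in> topspace T. gauge y \<in> {..<(1/2)^n}}"
      by (rule openin_continuous_map_preimage[OF continuous_map_gauge]) simp
    ultimately show False using not_openin_singleton_one[OF inf pc] by simp
  qed
  then obtain y where y: "\<And>n. y n \<in> carrier G" "\<And>n. y n \<noteq> \<one>" "\<And>n. gauge (y n) < (1/2)^n"
    by metis
  have "limitin T y \<one> sequentially"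
    unfolding limitin_sequentially
  proof (intro conjI allI impI)
    show "\<one> \<in> topspace T" using topspace_eq by simp
    fix W assume "openin T W \<and> \<one> \<in> W"
    then obtain \<epsilon> where \<epsilon>: "\<epsilon> > 0" "\<And>z. z \<in> carrier G \<Longrightarrow> \<bar>gauge z\<bar> < \<epsilon> \<Longrightarrow> z \<in> W"
      using pseudocompact_sublevel_subset_nbhd[OF pc continuous_map_gauge gauge_zero] by blast
    obtain N where N: "(1/2::real)^N < \<epsilon>" using real_arch_pow_inv[OF \<epsilon>(1), of "1/2"] by auto
    have "y n \<in> W" if "N \<le> n" for n
    proof (rule \<epsilon>(2)[OF y(1)])
      have "\<bar>gauge (y n)\<bar> = gauge (y n)" using gauge_nonneg[OF y(1)] by simp
      also have "\<dots> < (1/2)^n" by (rule y(3))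
      also have "\<dots> \<le> (1/2)^N" using that by (simp add: power_decreasing)
      finally show "\<bar>gauge (y n)\<bar> < \<epsilon>" using N by simp
    qed
    then show "\<exists>N. \<forall>n\<ge>N. y n \<in> W" by blast
  qed
  then have "has_nontrivial_convergent_seq T"
    using Hausdorff y(1,2) topspace_eq
    by (intro has_nontrivial_convergent_seq_if_limitin_avoiding) auto
  with no_seq show False by simp
qed

end

theorem proposition4p10:
  fixes G :: "('a, 'b) monoid_scheme" and T :: "'a topology"
  assumes "topological_group G T"
  shows "(\<not> has_nontrivial_convergent_seq T \<longrightarrow> TAP G T)
       \<and> (infinite (carrier G) \<and> pseudocompact T \<and> \<not> has_nontrivial_convergent_seq T
            \<longrightarrow> TAP G T \<and> \<not> NSS G T)"
proof -
  interpret topgroup G T by (rule topgroupI[OF assms])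
  show ?thesis
    using TAP_if_no_nontrivial_convergent_seq not_NSS_if_pseudocompact by blast
qed

end
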